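(* Let $P$ be a priority forest on $[n]_0$ with $m$ edges, and let $C$ be a maximal chain of $[\hat0,P]$ with Jordan–Hölder permutation $\lambda$. Then $s_P\circ\lambda$ is an $(m,n)$-parking function with priority forest $P$ and bird's eye permutation $\lambda^{-1}$.
   Context: $[n]=\{1,\dots,n\}$, $[n]_0=\{0,\dots,n\}$. A priority forest on $[n]_0$ is a rooted forest with vertex set $[n]_0$ whose component trees $T_0,T_1,\dots$ are increasing (each non-root vertex has a larger label than its parent) and satisfy: for $j<k$ every label of $T_j$ is smaller than every label of $T_k$. Its shifted parent map $s_P:[n]\to[n]$ is the partial function with $s_P(i)=p(i)+1$ for non-root $i$ with parent $p(i)$. $\Pi(n)$ is the poset of priority forests on $[n]_0$ ordered by inclusion of edge sets, with an extra top element; $\hat0$ is the edgeless forest. For priority forests $Q\lessdot Q'$ (one edge added), $\lambda(Q,Q')$ is the larger endpoint of the edge in $E(Q')\setminus E(Q)$. A maximal chain $\hat0=P_0\lessdot\cdots\lessdot P_m=P$ has Jordan–Hölder permutation $\lambda:[m]\to[n]$, $i\mapsto\lambda(P_{i-1},P_i)$, which is injective; $\lambda^{-1}$ is its partial inverse $[n]\to[m]$. An $(m,n)$-parking function is a map $\pi:[m]\to[n]$ such that when cars $1,\dots,m$ arrive in order to spots $1,\dots,n$ and car $i$ parks at the first empty spot $\ge\pi(i)$, all cars park. Its bird's eye permutation $\omega_\pi:[n]\to[m]$ sends each occupied spot to the car parked there. Its priority forest is the priority forest whose shifted parent map is $\pi\circ\omega_\pi$. *)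

theory Defs
  imports Main
begin

text \<open>A forest on the vertex set [n]_0 = {0..n} is encoded by its edge set E,
  each edge written as a pair (parent, child).\<close>

definition conn :: "(nat \<times> nat) set \<Rightarrow> (nat \<times> nat) set" where
  "conn E = (E \<union> E\<inverse>)\<^sup>*"

definition priority_forest :: "nat \<Rightarrow> (nat \<times> nat) set \<Rightarrow> bool" where
  "priority_forest n E \<longleftrightarrow>
     E \<subseteq> {0..n} \<times> {0..n}
   \<and> (\<forall>p c. (p, c) \<in> E \<longrightarrow> p < c)
   \<and> (\<forall>p p' c. (p, c) \<in> E \<longrightarrow> (p', c) \<in> E \<longrightarrow> p = p')
   \<and> (\<forall>x\<in>{0..n}. \<forall>y\<in>{0..n}. (x, y) \<notin> conn E \<longrightarrow>
        (\<forall>a b. (x, a) \<in> conn E \<longrightarrow> (y, b) \<in> conn E \<longrightarrow> a < b)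
      \<or> (\<forall>a b. (x, a) \<in> conn E \<longrightarrow> (y, b) \<in> conn E \<longrightarrow> b < a))"

definition shifted_parent :: "nat \<Rightarrow> (nat \<times> nat) set \<Rightarrow> nat \<Rightarrow> nat option" where
  "shifted_parent n E i =
     (if i \<in> {1..n} \<and> (\<exists>p. (p, i) \<in> E) then Some ((THE p. (p, i) \<in> E) + 1) else None)"

definition pf_cover :: "nat \<Rightarrow> (nat \<times> nat) set \<Rightarrow> (nat \<times> nat) set \<Rightarrow> bool" where
  "pf_cover n Q Q' \<longleftrightarrow> priority_forest n Q \<and> priority_forest n Q' \<and> Q \<subset> Q'
     \<and> \<not> (\<exists>R. priority_forest n R \<and> Q \<subset> R \<and> R \<subset> Q')"

definition maximal_chain :: "nat \<Rightarrow> (nat \<times> nat) set \<Rightarrow> (nat \<times> nat) set list \<Rightarrow> bool" where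
  "maximal_chain n P Cs \<longleftrightarrow> Cs \<noteq> [] \<and> hd Cs = {} \<and> last Cs = P
     \<and> (\<forall>i. Suc i < length Cs \<longrightarrow> pf_cover n (Cs ! i) (Cs ! Suc i))"

text \<open>lambda(Q,Q'): the larger endpoint (= child) of the added edge.\<close>
definition jh_label :: "(nat \<times> nat) set \<Rightarrow> (nat \<times> nat) set \<Rightarrow> nat" where
  "jh_label Q Q' = (THE c. \<exists>p. (p, c) \<in> Q' - Q)"

definition jh_perm :: "(nat \<times> nat) set list \<Rightarrow> nat \<Rightarrow> nat" where
  "jh_perm Cs i = jh_label (Cs ! (i - 1)) (Cs ! i)"

definition partial_inv :: "nat \<Rightarrow> (nat \<Rightarrow> nat) \<Rightarrow> nat \<Rightarrow> nat option" where
  "partial_inv m f s = (if \<exists>i\<in>{1..m}. f i = s then Some (THE i. i \<in> {1..m} \<and> f i = s) else None)"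

text \<open>Parking process: after cars 1..k arrived, the map spot \<mapsto> car.\<close>
primrec park_map :: "(nat \<Rightarrow> nat) \<Rightarrow> nat \<Rightarrow> nat \<Rightarrow> nat \<Rightarrow> nat option" where
  "park_map \<pi> n 0 = Map.empty"
| "park_map \<pi> n (Suc k) =
     (let M = park_map \<pi> n k in
      if \<exists>s. \<pi> (Suc k) \<le> s \<and> s \<le> n \<and> M s = None
      then M((LEAST s. \<pi> (Suc k) \<le> s \<and> s \<le> n \<and> M s = None) \<mapsto> Suc k)
      else M)"

definition parking_function :: "nat \<Rightarrow> nat \<Rightarrow> (nat \<Rightarrow> nat) \<Rightarrow> bool" where
  "parking_function m n \<pi> \<longleftrightarrow>
     (\<forall>i\<in>{1..m}. \<pi> i \<in> {1..n})
   \<and> (\<forall>k\<in>{1..m}. \<exists>s. \<pi> k \<le> s \<and> s \<le> n \<and> park_map \<pi> n (k - 1) s = None)"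

definition birds_eye :: "nat \<Rightarrow> nat \<Rightarrow> (nat \<Rightarrow> nat) \<Rightarrow> nat \<Rightarrow> nat option" where
  "birds_eye m n \<pi> s = (if s \<in> {1..n} then park_map \<pi> n m s else None)"

definition pf_of_parking :: "nat \<Rightarrow> nat \<Rightarrow> (nat \<Rightarrow> nat) \<Rightarrow> (nat \<times> nat) set" where
  "pf_of_parking m n \<pi> = (THE E. priority_forest n E \<and>
      (\<forall>i. shifted_parent n E i = map_option \<pi> (birds_eye m n \<pi> i)))"

end

theory Submission
  imports Defs
begin

text \<open>An increasing forest with unique parents is a priority forest exactly when it is
  gap-free: if p is the parent of c, every vertex strictly between p and c has a parent.
  Indeed, in a gap-free forest two vertices are connected iff no root lies between them, so
  the roots cut [n]_0 into the intervals that form the trees. Hence a cover in Pi(n) adds a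
  single edge, and when the i-th edge (p_i, c_i) of a maximal chain is added, all vertices
  strictly between p_i and c_i are already children of earlier edges. So car i, preferring
  spot p_i + 1 = s_P(c_i), finds the spots before c_i taken and c_i = lambda(i) free: it parks
  at lambda(i).\<close>

definition increasing_forest :: "nat \<Rightarrow> (nat \<times> nat) set \<Rightarrow> bool" where
  "increasing_forest n E \<longleftrightarrow>
     E \<subseteq> {0..n} \<times> {0..n}
   \<and> (\<forall>p c. (p, c) \<in> E \<longrightarrow> p < c)
   \<and> (\<forall>p p' c. (p, c) \<in> E \<longrightarrow> (p', c) \<in> E \<longrightarrow> p = p')"

definition gap_free :: "(nat \<times> nat) set \<Rightarrow> bool" where
  "gap_free E \<longleftrightarrow> (\<forall>(p, c) \<in> E. {p<..<c} \<subseteq> Range E)"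

lemma conn_refl: "(x, x) \<in> conn E"
  unfolding conn_def by simp

lemma conn_edge: "(x, y) \<in> E \<Longrightarrow> (x, y) \<in> conn E"
  unfolding conn_def by auto

lemma conn_sym: "(x, y) \<in> conn E \<Longrightarrow> (y, x) \<in> conn E"
  unfolding conn_def
  by (metis converse_Un converse_converse rtrancl_converseI sup_commute)

lemma conn_trans: "(x, y) \<in> conn E \<Longrightarrow> (y, z) \<in> conn E \<Longrightarrow> (x, z) \<in> conn E"
  unfolding conn_def by (rule rtrancl_trans)

lemma rtrancl_increasing_le:
  fixes E :: "('a::order \<times> 'a) set"
  assumes "\<forall>p c. (p, c) \<in> E \<longrightarrow> p < c" and "(x, y) \<in> E\<^sup>*"
  shows "x \<le> y"
  using assms(2) by induction (auto dest!: assms(1)[rule_format])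

lemma conn_from_root_rtrancl:
  assumes unique: "\<forall>p p' c. (p, c) \<in> E \<longrightarrow> (p', c) \<in> E \<longrightarrow> p = p'"
    and root: "v \<notin> Range E" and "(v, u) \<in> conn E"
  shows "(v, u) \<in> E\<^sup>*"
  using \<open>(v, u) \<in> conn E\<close> unfolding conn_def
proof induction
  case base
  show ?case by simp
next
  case (step y z)
  from step.hyps(2) show ?case
  proof
    assume "(y, z) \<in> E"
    with step.IH show ?thesis by simp
  next
    assume "(y, z) \<in> E\<inverse>"
    then have zy: "(z, y) \<in> E" by simp
    with root have "y \<noteq> v" by blast
    with step.IH obtain y' where "(v, y') \<in> E\<^sup>*" "(y', y) \<in> E"
      by (metis rtranclE)
    with zy unique show ?thesis by metis
  qed
qed

lemma priority_forest_gap_free: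
  assumes pf: "priority_forest n E"
  shows "gap_free E"
  unfolding gap_free_def
proof clarify
  fix p c v assume pc: "(p, c) \<in> E" and v: "v \<in> {p<..<c}"
  show "v \<in> Range E"
  proof (rule ccontr)
    assume root: "v \<notin> Range E"
    have "(p, v) \<notin> conn E"
    proof
      assume "(p, v) \<in> conn E"
      then have "(v, p) \<in> E\<^sup>*"
        using conn_from_root_rtrancl[OF _ root] conn_sym pf unfolding priority_forest_def by blast
      then have "v \<le> p" using rtrancl_increasing_le pf unfolding priority_forest_def by blast
      with v show False by simp
    qed
    moreover have "p \<le> n" "v \<le> n" using pf pc v unfolding priority_forest_def by auto
    ultimately have "(\<forall>a b. (p, a) \<in> conn E \<longrightarrow> (v, b) \<in> conn E \<longrightarrow> a < b)
        \<or> (\<forall>a b. (p, a) \<in> conn E \<longrightarrow> (v, b) \<in> conn E \<longrightarrow> b < a)"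
      using pf unfolding priority_forest_def by auto
    then show False
      using v conn_refl conn_edge[OF pc] by (metis greaterThanLessThan_iff less_asym)
  qed
qed

lemma conn_imp_Range:
  assumes inc: "\<forall>p c. (p, c) \<in> E \<longrightarrow> p < c" and gap: "gap_free E"
    and "(x, y) \<in> conn E"
  shows "{min x y<..max x y} \<subseteq> Range E"
  using \<open>(x, y) \<in> conn E\<close> unfolding conn_def
proof induction
  case base
  show ?case by simp
next
  case (step y z)
  obtain a b where ab: "(a, b) \<in> E" "{y, z} = {a, b}"
    using step.hyps(2) by auto
  have "{min y z<..max y z} = {a<..b}"
    using ab inc by (auto simp: doubleton_eq_iff)
  also have "\<dots> \<subseteq> Range E"
    using ab(1) gap unfolding gap_free_def by (fastforce simp: greaterThanAtMost_iff)
  finally have "{min y z<..max y z} \<subseteq> Range E" .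
  moreover have "{min x z<..max x z} \<subseteq> {min x y<..max x y} \<union> {min y z<..max y z}"
    by (auto simp: min_def max_def)
  ultimately show ?case
    using step.IH by blast
qed

lemma Range_imp_conn:
  assumes inc: "\<forall>p c. (p, c) \<in> E \<longrightarrow> p < c" and gap: "gap_free E"
  shows "x \<le> y \<Longrightarrow> {x<..y} \<subseteq> Range E \<Longrightarrow> (x, y) \<in> conn E"
proof (induction y arbitrary: x rule: less_induct)
  case (less y)
  show ?case
  proof (cases "x = y")
    case True
    then show ?thesis by (simp add: conn_refl)
  next
    case False
    with less.prems have "y \<in> Range E" by auto
    then obtain q where qy: "(q, y) \<in> E" by blast
    with inc have "q < y" by blast
    have "{q<..y - 1} = {q<..<y}"
      using \<open>q < y\<close> by auto
    also have "\<dots> \<subseteq> Range E"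
      using gap qy unfolding gap_free_def by blast
    finally have "{q<..y - 1} \<subseteq> Range E" .
    with \<open>q < y\<close> have "(q, y - 1) \<in> conn E" by (intro less.IH) auto
    moreover have "(x, y - 1) \<in> conn E"
    proof (rule less.IH)
      show "{x<..y - 1} \<subseteq> Range E"
        using less.prems(2) by (auto simp: subset_iff)
    qed (use less.prems False in auto)
    ultimately show ?thesis
      using conn_edge[OF qy] by (meson conn_sym conn_trans)
  qed
qed

text \<open>Between two components of a gap-free forest lies a root, which separates them.\<close>
lemma gap_free_separated:
  assumes inc: "\<forall>p c. (p, c) \<in> E \<longrightarrow> p < c" and gap: "gap_free E"
    and "(x, y) \<notin> conn E" "x \<le> y" "(x, a) \<in> conn E" "(y, b) \<in> conn E"
  shows "a < b"
proof -
  obtain r where r: "r \<in> {x<..y}" "r \<notin> Range E"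
    using Range_imp_conn[OF inc gap] assms(3,4) by blast
  have "a < r"
  proof (rule ccontr)
    assume "\<not> a < r"
    with r have "r \<in> {min x a<..max x a}" by auto
    with conn_imp_Range[OF inc gap \<open>(x, a) \<in> conn E\<close>] r show False by blast
  qed
  moreover have "r \<le> b"
  proof (rule ccontr)
    assume "\<not> r \<le> b"
    with r have "r \<in> {min y b<..max y b}" by auto
    with conn_imp_Range[OF inc gap \<open>(y, b) \<in> conn E\<close>] r show False by blast
  qed
  ultimately show ?thesis by simp
qed

lemma priority_forest_iff: "priority_forest n E \<longleftrightarrow> increasing_forest n E \<and> gap_free E"
proof
  assume "priority_forest n E"
  then show "increasing_forest n E \<and> gap_free E"
    using priority_forest_gap_free unfolding priority_forest_def increasing_forest_def by blast
next
  assume "increasing_forest n E \<and> gap_free E"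
  then have forest: "increasing_forest n E" and inc: "\<forall>p c. (p, c) \<in> E \<longrightarrow> p < c"
    and gap: "gap_free E"
    unfolding increasing_forest_def by blast+
  have "(\<forall>a b. (x, a) \<in> conn E \<longrightarrow> (y, b) \<in> conn E \<longrightarrow> a < b)
      \<or> (\<forall>a b. (x, a) \<in> conn E \<longrightarrow> (y, b) \<in> conn E \<longrightarrow> b < a)"
    if "(x, y) \<notin> conn E" for x y
    using gap_free_separated[OF inc gap] that conn_sym by (metis nat_le_linear)
  with forest show "priority_forest n E"
    unfolding priority_forest_def increasing_forest_def by blast
qed

text \<open>Adding the missing edge with the smallest child keeps Q gap-free.\<close>
lemma pf_cover_insert:
  assumes "pf_cover n Q Q'"
  obtains e where "e \<notin> Q" "Q' = insert e Q"
proof -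
  have pfQ: "priority_forest n Q" and pfQ': "priority_forest n Q'" and "Q \<subset> Q'"
    and no_between: "\<nexists>R. priority_forest n R \<and> Q \<subset> R \<and> R \<subset> Q'"
    using assms unfolding pf_cover_def by auto
  then obtain p c where pc: "(p, c) \<in> Q' - Q" and least: "\<And>e. e \<in> Q' - Q \<Longrightarrow> c \<le> snd e"
    using ex_has_least_nat[of "\<lambda>e. e \<in> Q' - Q" _ snd] by fastforce
  define R where "R = insert (p, c) Q"
  have "R \<subseteq> Q'"
    using pc \<open>Q \<subset> Q'\<close> unfolding R_def by auto
  with pfQ' have "increasing_forest n R"
    unfolding priority_forest_iff increasing_forest_def by blast
  moreover have "gap_free R"
    unfolding gap_free_def
  proof clarify
    fix a b v assume ab: "(a, b) \<in> R" and v: "v \<in> {a<..<b}"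
    show "v \<in> Range R"
    proof (cases "(a, b) \<in> Q")
      case True
      with pfQ v show ?thesis
        unfolding R_def priority_forest_iff gap_free_def by blast
    next
      case False
      with ab have "(a, b) = (p, c)" unfolding R_def by blast
      with pfQ' pc v obtain q where "(q, v) \<in> Q'"
        unfolding priority_forest_iff gap_free_def by blast
      moreover have "v < c"
        using v \<open>(a, b) = (p, c)\<close> by simp
      ultimately have "(q, v) \<in> Q"
        using least[of "(q, v)"] by force
      then show ?thesis unfolding R_def by blast
    qed
  qed
  ultimately have "priority_forest n R"
    by (simp add: priority_forest_iff)
  moreover have "Q \<subset> R"
    using pc unfolding R_def by blast
  ultimately have "R = Q'"
    using no_between \<open>R \<subseteq> Q'\<close> by blast
  with pc show thesis
    using that unfolding R_def by blast
qed

lemma shifted_parent_edge: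
  assumes "increasing_forest n E" "(a, b) \<in> E"
  shows "shifted_parent n E b = Some (Suc a)"
proof -
  have "(THE p. (p, b) \<in> E) = a"
    using assms unfolding increasing_forest_def by (blast intro: the_equality)
  moreover have "b \<in> {1..n}"
    using assms unfolding increasing_forest_def by fastforce
  ultimately show ?thesis
    using assms(2) unfolding shifted_parent_def by auto
qed

lemma shifted_parent_eq_None_iff:
  assumes "increasing_forest n E"
  shows "shifted_parent n E b = None \<longleftrightarrow> b \<notin> Range E"
proof
  assume "shifted_parent n E b = None"
  then show "b \<notin> Range E"
    using shifted_parent_edge[OF assms] by force
next
  assume "b \<notin> Range E"
  then show "shifted_parent n E b = None"
    unfolding shifted_parent_def by auto
qed

lemma shifted_parent_inject:
  assumes "increasing_forest n E" "increasing_forest n F"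
    and "shifted_parent n E = shifted_parent n F"
  shows "E = F"
proof -
  have sub: "E \<subseteq> F"
    if E: "increasing_forest n E" and F: "increasing_forest n F"
      and eq: "shifted_parent n E = shifted_parent n F" for E F
  proof clarify
    fix a b assume "(a, b) \<in> E"
    then have "shifted_parent n F b = Some (Suc a)"
      using shifted_parent_edge[OF E] eq by metis
    moreover from this have "b \<in> Range F"
      using shifted_parent_eq_None_iff[OF F, of b] by simp
    then obtain a' where "(a', b) \<in> F" by blast
    ultimately show "(a, b) \<in> F"
      using shifted_parent_edge[OF F] by fastforce
  qed
  show ?thesis
    using sub[OF assms] sub[OF assms(2,1) assms(3)[symmetric]] by (rule subset_antisym)
qed

lemma pf_of_parking_eqI:
  assumes "priority_forest n E"
    and "\<And>s. shifted_parent n E s = map_option \<pi> (birds_eye m n \<pi> s)"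
  shows "pf_of_parking m n \<pi> = E"
  unfolding pf_of_parking_def
proof (rule the_equality)
  fix F assume F: "priority_forest n F \<and> (\<forall>s. shifted_parent n F s = map_option \<pi> (birds_eye m n \<pi> s))"
  with assms have "shifted_parent n F = shifted_parent n E"
    by auto
  with F assms(1) show "F = E"
    using shifted_parent_inject unfolding priority_forest_iff by blast
qed (use assms in auto)

lemma partial_inv_eq_None_iff: "partial_inv m f s = None \<longleftrightarrow> s \<notin> f ` {1..m}"
  unfolding partial_inv_def by auto

lemma partial_inv_eq_Some_iff:
  assumes "inj_on f {1..m}"
  shows "partial_inv m f s = Some i \<longleftrightarrow> i \<in> {1..m} \<and> f i = s"
proof
  assume "partial_inv m f s = Some i"
  then have "\<exists>j\<in>{1..m}. f j = s" "i = (THE j. j \<in> {1..m} \<and> f j = s)"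
    unfolding partial_inv_def by (auto split: if_splits)
  then show "i \<in> {1..m} \<and> f i = s"
    using assms by (metis (mono_tags, lifting) inj_onD theI)
next
  assume "i \<in> {1..m} \<and> f i = s"
  then show "partial_inv m f s = Some i"
    using assms unfolding partial_inv_def by (auto intro!: the_equality dest: inj_onD)
qed

lemma partial_inv_Suc:
  assumes "inj_on f {1..Suc m}"
  shows "partial_inv (Suc m) f = (partial_inv m f)(f (Suc m) \<mapsto> Suc m)"
proof
  fix s
  have inj_m: "inj_on f {1..m}"
    using assms by (rule inj_on_subset) auto
  show "partial_inv (Suc m) f s = ((partial_inv m f)(f (Suc m) \<mapsto> Suc m)) s"
  proof (cases "s = f (Suc m)")
    case True
    then show ?thesis
      using partial_inv_eq_Some_iff[OF assms] by simp
  next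
    case new: False
    show ?thesis
    proof (cases "s \<in> f ` {1..m}")
      case True
      then obtain i where i: "i \<in> {1..m}" "f i = s" by blast
      then have "partial_inv (Suc m) f s = Some i" "partial_inv m f s = Some i"
        using partial_inv_eq_Some_iff[OF assms] partial_inv_eq_Some_iff[OF inj_m] by auto
      with new show ?thesis by simp
    next
      case False
      with new have "s \<notin> f ` {1..Suc m}"
        by (auto simp: le_Suc_eq)
      with False have "partial_inv (Suc m) f s = None" "partial_inv m f s = None"
        by (simp_all add: partial_inv_eq_None_iff)
      with new show ?thesis by simp
    qed
  qed
qed

lemma partial_inv_cong: "(\<And>i. i \<in> {1..m} \<Longrightarrow> f i = g i) \<Longrightarrow> partial_inv m f = partial_inv m g"
  unfolding partial_inv_def by (intro ext) (auto cong: conj_cong)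

lemma dom_partial_inv: "dom (partial_inv m f) = f ` {1..m}"
  by (simp add: dom_def partial_inv_eq_None_iff)

lemma park_map_Suc_first_free:
  assumes "\<pi> (Suc j) \<le> s" "s \<le> n" "s \<notin> dom (park_map \<pi> n j)"
    and "{\<pi> (Suc j)..<s} \<subseteq> dom (park_map \<pi> n j)"
  shows "park_map \<pi> n (Suc j) = (park_map \<pi> n j)(s \<mapsto> Suc j)"
proof -
  let ?free = "\<lambda>t. \<pi> (Suc j) \<le> t \<and> t \<le> n \<and> park_map \<pi> n j t = None"
  have "(LEAST t. ?free t) = s"
    using assms by (intro Least_equality) (auto simp: subset_iff domIff not_le)
  with assms(1-3) show ?thesis
    by (auto simp: Let_def domIff)
qed

definition parks_at :: "nat \<Rightarrow> nat \<Rightarrow> (nat \<Rightarrow> nat) \<Rightarrow> (nat \<Rightarrow> nat) \<Rightarrow> bool" where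
  "parks_at m n \<pi> c \<longleftrightarrow> inj_on c {1..m}
     \<and> (\<forall>j\<in>{1..m}. 1 \<le> \<pi> j \<and> \<pi> j \<le> c j \<and> c j \<le> n \<and> {\<pi> j..<c j} \<subseteq> c ` {1..<j})"

lemma park_map_eq_partial_inv:
  assumes "parks_at m n \<pi> c"
  shows "j \<le> m \<Longrightarrow> park_map \<pi> n j = partial_inv j c"
proof (induction j)
  case 0
  show ?case by (simp add: partial_inv_def)
next
  case (Suc j)
  have inj: "inj_on c {1..Suc j}"
    using assms Suc.prems unfolding parks_at_def by (auto intro: inj_on_subset)
  have target: "\<pi> (Suc j) \<le> c (Suc j)" "c (Suc j) \<le> n"
    and "{\<pi> (Suc j)..<c (Suc j)} \<subseteq> c ` {1..<Suc j}"
    using assms Suc.prems unfolding parks_at_def by auto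
  then have taken: "{\<pi> (Suc j)..<c (Suc j)} \<subseteq> c ` {1..j}"
    by (simp add: atLeastLessThanSuc_atLeastAtMost)
  have "c (Suc j) \<notin> c ` {1..j}"
    using inj_on_image_mem_iff[OF inj] by simp
  then have "park_map \<pi> n (Suc j) = (partial_inv j c)(c (Suc j) \<mapsto> Suc j)"
    using park_map_Suc_first_free[of \<pi> j "c (Suc j)" n] target taken Suc
    by (simp add: dom_partial_inv)
  then show ?case
    using partial_inv_Suc[OF inj] by simp
qed

lemma parks_at_parking_function:
  assumes "parks_at m n \<pi> c"
  shows "parking_function m n \<pi>"
  unfolding parking_function_def
proof (intro conjI ballI)
  fix i assume "i \<in> {1..m}"
  with assms show "\<pi> i \<in> {1..n}"
    unfolding parks_at_def by fastforce
next
  fix k assume k: "k \<in> {1..m}"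
  moreover have "inj_on c {1..m}"
    using assms unfolding parks_at_def by blast
  ultimately have "c k \<notin> c ` {1..k - 1}"
    by (subst inj_on_image_mem_iff[of c "{1..m}"]) auto
  moreover have "park_map \<pi> n (k - 1) = partial_inv (k - 1) c"
    using k by (intro park_map_eq_partial_inv[OF assms]) auto
  ultimately have "park_map \<pi> n (k - 1) (c k) = None"
    by (simp add: partial_inv_eq_None_iff)
  with k assms show "\<exists>s. \<pi> k \<le> s \<and> s \<le> n \<and> park_map \<pi> n (k - 1) s = None"
    unfolding parks_at_def by auto
qed

lemma parks_at_birds_eye:
  assumes "parks_at m n \<pi> c"
  shows "birds_eye m n \<pi> = partial_inv m c"
proof
  fix s
  have "c ` {1..m} \<subseteq> {1..n}"
    using assms unfolding parks_at_def by fastforce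
  then have "partial_inv m c s = None" if "s \<notin> {1..n}"
    using that by (auto simp: partial_inv_eq_None_iff)
  then show "birds_eye m n \<pi> s = partial_inv m c s"
    using park_map_eq_partial_inv[OF assms order_refl] unfolding birds_eye_def by auto
qed

locale pf_maximal_chain =
  fixes n :: nat and P :: "(nat \<times> nat) set" and Cs :: "(nat \<times> nat) set list"
  assumes pf: "priority_forest n P" and chain: "maximal_chain n P Cs"
begin

abbreviation rank :: nat where
  "rank \<equiv> length Cs - 1"

definition edge :: "nat \<Rightarrow> nat \<times> nat" where
  "edge i = the_elem (Cs ! i - Cs ! (i - 1))"

abbreviation parent :: "nat \<Rightarrow> nat" where
  "parent i \<equiv> fst (edge i)"

abbreviation child :: "nat \<Rightarrow> nat" where
  "child i \<equiv> snd (edge i)"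

lemma nth_0: "Cs ! 0 = {}" and nth_rank: "Cs ! rank = P"
  using chain unfolding maximal_chain_def by (auto simp: hd_conv_nth last_conv_nth)

lemma cover_nth:
  assumes "i \<in> {1..rank}"
  shows "pf_cover n (Cs ! (i - 1)) (Cs ! i)"
proof -
  from assms have "Suc (i - 1) < length Cs" "Suc (i - 1) = i"
    by auto
  with chain show ?thesis
    unfolding maximal_chain_def by metis
qed

lemma nth_priority_forest: "i \<in> {1..rank} \<Longrightarrow> priority_forest n (Cs ! i)"
  using cover_nth unfolding pf_cover_def by blast

lemma edge_step:
  assumes "i \<in> {1..rank}"
  shows "edge i \<notin> Cs ! (i - 1)" and "Cs ! i = insert (edge i) (Cs ! (i - 1))"
proof -
  obtain e where "e \<notin> Cs ! (i - 1)" "Cs ! i = insert e (Cs ! (i - 1))"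
    using pf_cover_insert[OF cover_nth[OF assms]] .
  moreover from this have "edge i = e"
    unfolding edge_def by (simp add: insert_Diff_if)
  ultimately show "edge i \<notin> Cs ! (i - 1)" "Cs ! i = insert (edge i) (Cs ! (i - 1))"
    by simp_all
qed

lemma nth_eq_edges: "j \<le> rank \<Longrightarrow> Cs ! j = edge ` {1..j}"
proof (induction j)
  case 0
  show ?case by (simp add: nth_0)
next
  case (Suc j)
  then show ?case
    using edge_step(2)[of "Suc j"] by (simp add: atLeastAtMostSuc_conv)
qed

lemma P_eq_edges: "P = edge ` {1..rank}"
  using nth_eq_edges[of rank] nth_rank by simp

lemma increasing_forest_P: "increasing_forest n P"
  using pf by (simp add: priority_forest_iff)

lemma edge_in_P: "i \<in> {1..rank} \<Longrightarrow> (parent i, child i) \<in> P"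
  using P_eq_edges by auto

lemma parent_less_child: "i \<in> {1..rank} \<Longrightarrow> parent i < child i"
  using edge_in_P increasing_forest_P unfolding increasing_forest_def by blast

lemma child_le:
  assumes "i \<in> {1..rank}"
  shows "child i \<le> n"
proof -
  have "(parent i, child i) \<in> {0..n} \<times> {0..n}"
    using edge_in_P[OF assms] increasing_forest_P unfolding increasing_forest_def by blast
  then show ?thesis by (simp add: mem_Times_iff)
qed

lemma child_neq:
  assumes "i \<in> {1..rank}" "j \<in> {1..rank}" "i < j"
  shows "child i \<noteq> child j"
proof
  assume "child i = child j"
  then have "parent i = parent j"
    using edge_in_P[of i] edge_in_P[of j] assms increasing_forest_P
    unfolding increasing_forest_def by metis
  with \<open>child i = child j\<close> have "edge i = edge j"
    by (simp add: prod_eq_iff)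
  moreover have "edge i \<in> Cs ! (j - 1)"
    using nth_eq_edges[of "j - 1"] assms by auto
  ultimately show False
    using edge_step(1)[OF assms(2)] by simp
qed

lemma inj_on_child: "inj_on child {1..rank}"
proof (rule inj_onI)
  fix i j assume "i \<in> {1..rank}" "j \<in> {1..rank}" "child i = child j"
  then show "i = j"
    using child_neq[of i j] child_neq[of j i] by (cases i j rule: linorder_cases) auto
qed

lemma card_P: "card P = rank"
proof -
  have "inj_on edge {1..rank}"
    using inj_on_child by (auto simp: inj_on_def)
  then show ?thesis
    using P_eq_edges by (simp add: card_image)
qed

lemma jh_perm_eq_child:
  assumes "i \<in> {1..rank}"
  shows "jh_perm Cs i = child i"
proof -
  have "Cs ! i - Cs ! (i - 1) = {edge i}"
    using edge_step[OF assms] by auto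
  moreover obtain p c where "edge i = (p, c)"
    by fastforce
  ultimately show ?thesis
    unfolding jh_perm_def jh_label_def by (auto intro!: the_equality)
qed

lemma children_between:
  assumes i: "i \<in> {1..rank}"
  shows "{parent i<..<child i} \<subseteq> child ` {1..<i}"
proof
  fix v assume v: "v \<in> {parent i<..<child i}"
  have "(parent i, child i) \<in> Cs ! i" and "gap_free (Cs ! i)"
    using edge_step(2)[OF i] nth_priority_forest[OF i] by (auto simp: priority_forest_iff)
  with v obtain q where "(q, v) \<in> Cs ! i"
    unfolding gap_free_def by blast
  moreover have "(q, v) \<noteq> edge i"
  proof
    assume "(q, v) = edge i"
    then have "v = child i"
      by (metis snd_conv)
    with v show False by simp
  qed
  ultimately have "(q, v) \<in> Cs ! (i - 1)"
    using edge_step(2)[OF i] by auto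
  then obtain j where "j \<in> {1..i - 1}" "edge j = (q, v)"
    using nth_eq_edges[of "i - 1"] i by auto
  then show "v \<in> child ` {1..<i}"
    by (intro image_eqI[of _ _ j]) auto
qed

lemma shifted_parent_child: "i \<in> {1..rank} \<Longrightarrow> shifted_parent n P (child i) = Some (Suc (parent i))"
  by (rule shifted_parent_edge[OF increasing_forest_P edge_in_P])

abbreviation pref :: "nat \<Rightarrow> nat" where
  "pref \<equiv> \<lambda>i. the (shifted_parent n P (jh_perm Cs i))"

lemma pref_eq: "i \<in> {1..rank} \<Longrightarrow> pref i = Suc (parent i)"
  by (simp add: jh_perm_eq_child shifted_parent_child)

lemma parks_at_child: "parks_at rank n pref child"
  unfolding parks_at_def
proof (intro conjI ballI inj_on_child)
  fix j assume j: "j \<in> {1..rank}"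
  then show "1 \<le> pref j" "pref j \<le> child j" "child j \<le> n"
    using pref_eq[OF j] parent_less_child[OF j] child_le[OF j] by auto
  have "{pref j..<child j} = {parent j<..<child j}"
    using pref_eq[OF j] by auto
  then show "{pref j..<child j} \<subseteq> child ` {1..<j}"
    using children_between[OF j] by simp
qed

lemma shifted_parent_eq: "shifted_parent n P s = map_option pref (partial_inv rank child s)"
proof (cases "s \<in> child ` {1..rank}")
  case True
  then obtain i where i: "i \<in> {1..rank}" "s = child i" by blast
  then have "partial_inv rank child s = Some i"
    using partial_inv_eq_Some_iff[OF inj_on_child] by simp
  with i show ?thesis
    by (simp add: shifted_parent_child pref_eq)
next
  case False
  have "Range P = child ` {1..rank}"
    by (simp add: P_eq_edges Range_snd image_image)
  with False have "shifted_parent n P s = None"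
    using shifted_parent_eq_None_iff[OF increasing_forest_P] by simp
  moreover have "partial_inv rank child s = None"
    using False by (simp add: partial_inv_eq_None_iff)
  ultimately show ?thesis by simp
qed

end

theorem lemma4p2:
  fixes n m :: nat and P :: "(nat \<times> nat) set" and Cs :: "(nat \<times> nat) set list"
  assumes "priority_forest n P"
    and "card P = m"
    and "maximal_chain n P Cs"
  shows "(\<forall>i\<in>{1..m}. shifted_parent n P (jh_perm Cs i) \<noteq> None)
       \<and> parking_function m n (\<lambda>i. the (shifted_parent n P (jh_perm Cs i)))
       \<and> pf_of_parking m n (\<lambda>i. the (shifted_parent n P (jh_perm Cs i))) = P
       \<and> birds_eye m n (\<lambda>i. the (shifted_parent n P (jh_perm Cs i))) = partial_inv m (jh_perm Cs)"
proof -
  interpret pf_maximal_chain n P Cs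
    using assms(1,3) by unfold_locales
  have m: "m = rank"
    using assms(2) card_P by simp
  have birds_eye: "birds_eye m n pref = partial_inv m child"
    unfolding m by (rule parks_at_birds_eye[OF parks_at_child])
  have "\<forall>i\<in>{1..m}. shifted_parent n P (jh_perm Cs i) \<noteq> None"
    unfolding m by (simp add: jh_perm_eq_child shifted_parent_child)
  moreover have "parking_function m n pref"
    unfolding m by (rule parks_at_parking_function[OF parks_at_child])
  moreover have "pf_of_parking m n pref = P"
  proof (rule pf_of_parking_eqI[OF pf])
    show "shifted_parent n P s = map_option pref (birds_eye m n pref s)" for s
      unfolding birds_eye unfolding m by (rule shifted_parent_eq)
  qed
  moreover have "partial_inv m child = partial_inv m (jh_perm Cs)"
    unfolding m by (intro partial_inv_cong) (simp add: jh_perm_eq_child)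
  ultimately show ?thesis
    using birds_eye by simp
qed

end
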